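(* For every positive integer $x$, $R(x)=1$ if and only if $M(x)\in\mathcal{N}$.
   Context: For a positive integer $x$, write $x=2^{k}x'$ with $x'$ odd, and define the reduced Collatz function $R(x)=(3x'+1)/2^{v}$, where $2^{v}$ is the largest power of $2$ dividing $3x'+1$ (so $R(x)=R(2^n x)$ for all $n\ge 0$). Define $M(x)=2^{-m}x$, where $m$ is the smallest natural number with $x<2^m$; thus $M(x)\in[1/2,1)$. For $n\ge 0$ let $y^*_n=(0.1\{01\}^n)_2$ in binary, where $\{01\}^n$ denotes $n$ consecutive repetitions of the block $01$ (so $y^*_0=1/2$, $y^*_1=5/8$, \dots), and let $\mathcal{N}=\{y^*_n:n\ge 0\}$. *)

theory Defs
  imports Complex_Main "HOL-Computational_Algebra.Primes"
begin

definition odd_part :: "nat \<Rightarrow> nat" where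
  "odd_part x = x div 2 ^ multiplicity (2::nat) x"

definition R :: "nat \<Rightarrow> nat" where
  "R x = (3 * odd_part x + 1) div 2 ^ multiplicity (2::nat) (3 * odd_part x + 1)"

definition M :: "nat \<Rightarrow> real" where
  "M x = real x / 2 ^ (LEAST m::nat. x < 2 ^ m)"

text \<open>y*_n = (0.1{01}^n)_2: binary digits 1 at positions 1,3,...,2n+1.\<close>
definition ystar :: "nat \<Rightarrow> real" where
  "ystar n = (\<Sum>j\<le>n. (1/2) ^ (2*j+1))"

definition NN :: "real set" where
  "NN = {ystar n | n. True}"

end

theory Submission
  imports Defs
begin

text \<open>
  Write \<open>x = 2\<^sup>a w\<close> with \<open>w\<close> odd. Then \<open>R x = 1\<close> says that \<open>3w + 1\<close> is a power of two;
  since \<open>2\<^sup>k \<equiv> (-1)\<^sup>k (mod 3)\<close> the exponent is even, so \<open>w = (4\<^sup>n\<^sup>+\<^sup>1 - 1)/3\<close>, whose binary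
  expansion is \<open>1{01}\<^sup>n\<close>. Normalising such a \<open>w\<close> to \<open>[1/2, 1)\<close> gives exactly \<open>y*\<^sub>n\<close>.
  Conversely \<open>M\<close> ignores powers of two, and \<open>M w = y*\<^sub>n\<close> with both numerators odd forces
  \<open>w = (4\<^sup>n\<^sup>+\<^sup>1 - 1)/3\<close>.
\<close>

lemma odd_part_pow2_mult_odd:
  assumes "odd w"
  shows "odd_part (2 ^ k * w) = w"
proof -
  have "multiplicity 2 (2 ^ k * w) = k"
    by (rule multiplicity_decomposeI) (use assms in auto)
  then show ?thesis
    unfolding odd_part_def by simp
qed

lemma pow2_mult_odd_decomposition:
  fixes x :: nat
  assumes "x > 0"
  obtains a w where "x = 2 ^ a * w" and "odd w"
proof (rule multiplicity_decompose'[of x 2])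
  show "x \<noteq> 0" "\<not> is_unit (2::nat)"
    using assms by auto
qed (rule that)

lemma odd_part_eq_1_iff:
  assumes "y > 0"
  shows "odd_part y = 1 \<longleftrightarrow> (\<exists>k. y = 2 ^ k)"
proof -
  obtain a w where y: "y = 2 ^ a * w" and "odd w"
    using pow2_mult_odd_decomposition[OF assms] .
  then have "odd_part y = w"
    by (simp add: odd_part_pow2_mult_odd)
  then show ?thesis
    using y odd_part_pow2_mult_odd[of 1] by auto
qed

lemma R_eq_1_iff: "R x = 1 \<longleftrightarrow> (\<exists>k. 3 * odd_part x + 1 = 2 ^ k)"
proof -
  have "R x = odd_part (3 * odd_part x + 1)"
    unfolding R_def odd_part_def ..
  then show ?thesis
    using odd_part_eq_1_iff[of "3 * odd_part x + 1"] by simp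
qed

fun alt_ones :: "nat \<Rightarrow> nat" where
  "alt_ones 0 = 1"
| "alt_ones (Suc n) = 4 * alt_ones n + 1"

lemma three_mult_alt_ones: "3 * alt_ones n + 1 = 4 ^ Suc n"
  by (induction n) simp_all

lemma odd_alt_ones: "odd (alt_ones n)"
  by (cases n) simp_all

lemma alt_ones_bounds: "2 ^ (2 * n) \<le> alt_ones n" "alt_ones n < 2 ^ (2 * n + 1)"
proof -
  have "3 * alt_ones n + 1 = 4 * 2 ^ (2 * n)"
    using three_mult_alt_ones[of n] by (simp add: power_mult)
  then show "2 ^ (2 * n) \<le> alt_ones n" "alt_ones n < 2 ^ (2 * n + 1)"
    by simp_all
qed

lemma ystar_eq_alt_ones: "ystar n = alt_ones n / 2 ^ (2 * n + 1)"
proof (induction n)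
  case 0
  then show ?case
    by (simp add: ystar_def)
next
  case (Suc n)
  have "ystar (Suc n) = ystar n + (1 / 2) ^ (2 * Suc n + 1)"
    by (simp only: ystar_def sum.atMost_Suc)
  also have "\<dots> = alt_ones n / 2 ^ (2 * n + 1) + (1 / 2) ^ (2 * Suc n + 1)"
    by (simp only: Suc.IH)
  also have "\<dots> = (4 * alt_ones n + 1) / 2 ^ (2 * Suc n + 1)"
    by (simp add: field_simps power_add power_one_over)
  finally show ?case
    by simp
qed

lemma pow2_mod_3: "(2::nat) ^ k mod 3 = (if even k then 1 else 2)"
proof (induction k)
  case (Suc k)
  have "(2::nat) ^ Suc k mod 3 = 2 * (2 ^ k mod 3) mod 3"
    by (simp add: mod_mult_right_eq)
  with Suc show ?case
    by (simp split: if_splits)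
qed simp

lemma three_mult_plus_1_eq_pow2_iff:
  assumes "w > 0"
  shows "(\<exists>k. 3 * w + 1 = 2 ^ k) \<longleftrightarrow> (\<exists>n. w = alt_ones n)"
proof
  assume "\<exists>k. 3 * w + 1 = 2 ^ k"
  then obtain k where k: "3 * w + 1 = 2 ^ k" ..
  have "(2::nat) ^ k mod 3 = (3 * w + 1) mod 3"
    by (simp only: k)
  also have "\<dots> = 1"
    by presburger
  finally have "even k"
    by (auto simp: pow2_mod_3 split: if_splits)
  then obtain j where kj: "k = 2 * j" ..
  have "j \<noteq> 0"
  proof
    assume "j = 0"
    with k kj assms show False
      by simp
  qed
  then obtain n where "j = Suc n"
    using not0_implies_Suc by blast
  then have "3 * w + 1 = 3 * alt_ones n + 1"
    using k kj three_mult_alt_ones[of n] by (simp add: power_mult)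
  then show "\<exists>n. w = alt_ones n"
    by auto
next
  assume "\<exists>n. w = alt_ones n"
  then obtain n where "w = alt_ones n" ..
  then have "3 * w + 1 = 2 ^ (2 * Suc n)"
    using three_mult_alt_ones[of n] by (simp add: power_mult)
  then show "\<exists>k. 3 * w + 1 = 2 ^ k" ..
qed

lemma M_eq_of_pow2_bounds:
  assumes "2 ^ k \<le> x" "x < 2 ^ (k + 1)"
  shows "M x = x / 2 ^ (k + 1)"
proof -
  have "(LEAST m. x < 2 ^ m) = k + 1"
  proof (rule Least_equality)
    fix m
    assume "x < 2 ^ m"
    then have "(2::nat) ^ k < 2 ^ m"
      using assms(1) by linarith
    then show "k + 1 \<le> m"
      by simp
  qed (rule assms(2))
  then show ?thesis
    unfolding M_def by simp
qed

lemma M_pow2_mult: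
  assumes "x > 0"
  shows "M (2 ^ a * x) = M x"
proof -
  obtain k where k: "2 ^ k \<le> x" "x < 2 ^ (k + 1)"
    using ex_power_ivl1[of 2 x] assms by auto
  then have "2 ^ (a + k) \<le> 2 ^ a * x" "2 ^ a * x < 2 ^ (a + k + 1)"
    by (simp_all add: power_add)
  then have "M (2 ^ a * x) = 2 ^ a * x / 2 ^ (a + k + 1)"
    by (rule M_eq_of_pow2_bounds)
  also have "\<dots> = M x"
    using M_eq_of_pow2_bounds[OF k] by (simp add: power_add)
  finally show ?thesis .
qed

lemma M_in_NN_iff:
  assumes "odd w"
  shows "M w \<in> NN \<longleftrightarrow> (\<exists>n. w = alt_ones n)"
proof
  assume "M w \<in> NN"
  then obtain n where n: "M w = ystar n"
    unfolding NN_def by blast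
  obtain k where k: "2 ^ k \<le> w" "w < 2 ^ (k + 1)"
    using ex_power_ivl1[of 2 w] odd_pos[OF assms] by auto
  have "real w / 2 ^ (k + 1) = alt_ones n / 2 ^ (2 * n + 1)"
    using n M_eq_of_pow2_bounds[OF k] by (simp add: ystar_eq_alt_ones)
  then have "real (2 ^ (2 * n + 1) * w) = real (2 ^ (k + 1) * alt_ones n)"
    by (simp add: field_simps)
  then have "2 ^ (2 * n + 1) * w = 2 ^ (k + 1) * alt_ones n"
    by (simp only: of_nat_eq_iff)
  then have "odd_part (2 ^ (2 * n + 1) * w) = odd_part (2 ^ (k + 1) * alt_ones n)"
    by (rule arg_cong)
  then have "w = alt_ones n"
    by (simp only: odd_part_pow2_mult_odd[OF assms] odd_part_pow2_mult_odd[OF odd_alt_ones])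
  then show "\<exists>n. w = alt_ones n" ..
next
  assume "\<exists>n. w = alt_ones n"
  then obtain n where "w = alt_ones n" ..
  then have "M w = ystar n"
    using M_eq_of_pow2_bounds[OF alt_ones_bounds] by (simp add: ystar_eq_alt_ones)
  then show "M w \<in> NN"
    unfolding NN_def by blast
qed

theorem mainTheorem2:
  fixes x :: nat
  assumes "x > 0"
  shows "R x = 1 \<longleftrightarrow> M x \<in> NN"
proof -
  obtain a w where x: "x = 2 ^ a * w" and odd_w: "odd w"
    using pow2_mult_odd_decomposition[OF assms] .
  then have odd_part_x: "odd_part x = w"
    by (simp add: odd_part_pow2_mult_odd)
  have "R x = 1 \<longleftrightarrow> (\<exists>k. 3 * w + 1 = 2 ^ k)"
    by (simp only: R_eq_1_iff odd_part_x)
  also have "\<dots> \<longleftrightarrow> (\<exists>n. w = alt_ones n)"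
    using odd_pos[OF odd_w] by (rule three_mult_plus_1_eq_pow2_iff)
  also have "\<dots> \<longleftrightarrow> M w \<in> NN"
    using M_in_NN_iff[OF odd_w] ..
  also have "M w = M x"
    using x M_pow2_mult[OF odd_pos[OF odd_w]] by simp
  finally show ?thesis .
qed

end
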